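(* Let $\alpha\geq 1$ be a real number. If a connected $(n,m)$-graph $G$ has maximum value of $\chi_\alpha$ among all connected $(n,m)$-graphs, then the maximum vertex degree in $G$ is $n-1$.
   Context: All graphs are finite, simple, undirected and connected; an $(n,m)$-graph has $n$ vertices and $m$ edges. The general sum-connectivity index is $\chi_\alpha(G)=\sum_{uv\in E(G)}(d_u+d_v)^\alpha$, where $d_u$ is the degree of vertex $u$. *)

theory Defs
  imports "HOL-Analysis.Analysis"
begin

definition simple_graph :: "'a set \<Rightarrow> 'a set set \<Rightarrow> bool" where
  "simple_graph V E \<longleftrightarrow> finite V \<and> (\<forall>e\<in>E. e \<subseteq> V \<and> card e = 2)"

definition adj :: "'a set set \<Rightarrow> 'a \<Rightarrow> 'a \<Rightarrow> bool" where
  "adj E u v \<longleftrightarrow> {u, v} \<in> E"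

definition connected_graph :: "'a set \<Rightarrow> 'a set set \<Rightarrow> bool" where
  "connected_graph V E \<longleftrightarrow> simple_graph V E \<and> V \<noteq> {} \<and>
     (\<forall>u\<in>V. \<forall>v\<in>V. (adj E)\<^sup>*\<^sup>* u v)"

definition degree :: "'a set set \<Rightarrow> 'a \<Rightarrow> nat" where
  "degree E v = card {e \<in> E. v \<in> e}"

definition chi :: "real \<Rightarrow> 'a set set \<Rightarrow> real" where
  "chi \<alpha> E = (\<Sum>e\<in>E. (real (\<Sum>v\<in>e. degree E v)) powr \<alpha>)"

definition max_degree :: "'a set \<Rightarrow> 'a set set \<Rightarrow> nat" where
  "max_degree V E = Max (degree E ` V)"

end

theory Submission
  imports Defs
begin

text \<open>
  Let \<open>u\<close> be a vertex of maximum degree and suppose some vertex is not adjacent to it.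
  A walk from \<open>u\<close> to that vertex leaves the closed neighbourhood of \<open>u\<close>, which yields a
  neighbour \<open>v\<close> of \<open>u\<close> having neighbours not adjacent to \<open>u\<close>. Kelmans' operation moves the
  edges from \<open>v\<close> to these \<open>k > 0\<close> vertices over to \<open>u\<close>: the graph stays connected with the
  same number of edges, \<open>d\<^sub>u\<close> grows by \<open>k\<close>, \<open>d\<^sub>v\<close> drops by \<open>k\<close> and all other degrees are
  unchanged. As \<open>d\<^sub>v \<le> d\<^sub>u\<close> and \<open>t \<mapsto> t\<^sup>\<alpha>\<close> has nondecreasing increments for \<open>\<alpha> \<ge> 1\<close>, no
  edge term of \<open>\<chi>\<^sub>\<alpha>\<close> decreases and the moved edges gain strictly, contradicting maximality.
\<close>

lemma powr_increment_mono:
  fixes s t k \<alpha> :: real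
  assumes "1 \<le> \<alpha>" "0 < s" "s \<le> t" "0 \<le> k"
  shows "(s + k) powr \<alpha> - s powr \<alpha> \<le> (t + k) powr \<alpha> - t powr \<alpha>"
proof -
  define h where "h x = (x + k) powr \<alpha> - x powr \<alpha>" for x
  define h' where "h' x = \<alpha> * (x + k) powr (\<alpha> - 1) - \<alpha> * x powr (\<alpha> - 1)" for x
  have "h s \<le> h t"
  proof (rule deriv_nonneg_imp_mono[of s t h h'])
    fix x assume "x \<in> {s..t}"
    then have "0 < x" using assms by auto
    then show "(h has_real_derivative h' x) (at x)"
      unfolding h_def h'_def using \<open>0 \<le> k\<close>
      by (auto intro!: derivative_eq_intros)
    have "x powr (\<alpha> - 1) \<le> (x + k) powr (\<alpha> - 1)"
      using \<open>0 < x\<close> assms by (intro powr_mono2) auto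
    then show "0 \<le> h' x"
      unfolding h'_def using assms by (simp flip: right_diff_distrib)
  qed (use assms in auto)
  then show ?thesis unfolding h_def .
qed

text \<open>In the application \<open>A\<close>, \<open>C\<close> and \<open>B\<close> are the common neighbours of \<open>u\<close> and \<open>v\<close>, the
  remaining neighbours of \<open>u\<close> and the neighbours moved from \<open>v\<close> to \<open>u\<close>; \<open>g\<close> is the degree.\<close>

lemma powr_sum_shift_less:
  fixes g :: "'a \<Rightarrow> real" and p q k \<alpha> :: real
  assumes "1 \<le> \<alpha>" "finite B" "B \<noteq> {}" "\<And>x. 0 \<le> g x" "q \<le> p" "0 < k" "0 < q - k"
  shows "(\<Sum>x\<in>A. (p + g x) powr \<alpha> + (q + g x) powr \<alpha>) + (\<Sum>x\<in>C. (p + g x) powr \<alpha>)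
           + (\<Sum>x\<in>B. (q + g x) powr \<alpha>)
         < (\<Sum>x\<in>A. (p + k + g x) powr \<alpha> + (q - k + g x) powr \<alpha>) + (\<Sum>x\<in>C. (p + k + g x) powr \<alpha>)
           + (\<Sum>x\<in>B. (p + k + g x) powr \<alpha>)"
proof -
  have "(\<Sum>x\<in>A. (p + g x) powr \<alpha> + (q + g x) powr \<alpha>)
      \<le> (\<Sum>x\<in>A. (p + k + g x) powr \<alpha> + (q - k + g x) powr \<alpha>)"
  proof (rule sum_mono)
    fix x
    have "0 \<le> g x" by (rule assms(4))
    have "(q - k + g x + k) powr \<alpha> - (q - k + g x) powr \<alpha> \<le> (p + g x + k) powr \<alpha> - (p + g x) powr \<alpha>"
      by (intro powr_increment_mono) (use assms(1,5-7) \<open>0 \<le> g x\<close> in auto)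
    then show "(p + g x) powr \<alpha> + (q + g x) powr \<alpha> \<le> (p + k + g x) powr \<alpha> + (q - k + g x) powr \<alpha>"
      by (simp add: algebra_simps)
  qed
  moreover have "(\<Sum>x\<in>C. (p + g x) powr \<alpha>) \<le> (\<Sum>x\<in>C. (p + k + g x) powr \<alpha>)"
    using assms by (intro sum_mono powr_mono2) (auto intro: add_nonneg_nonneg)
  moreover have "(\<Sum>x\<in>B. (q + g x) powr \<alpha>) < (\<Sum>x\<in>B. (p + k + g x) powr \<alpha>)"
    using assms by (intro sum_strict_mono powr_less_mono2) (auto intro: add_nonneg_nonneg)
  ultimately show ?thesis by linarith
qed

definition nbrs :: "'a set set \<Rightarrow> 'a \<Rightarrow> 'a set" where
  "nbrs E x = {y. {x, y} \<in> E}"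

lemma simple_graph_finite_edges: "simple_graph V E \<Longrightarrow> finite E"
  unfolding simple_graph_def by (meson PowI finite_Pow_iff rev_finite_subset subsetI)

lemma simple_graph_edgeE:
  assumes "simple_graph V E" "e \<in> E"
  obtains a b where "e = {a, b}" "a \<noteq> b" "a \<in> V" "b \<in> V"
  using assms unfolding simple_graph_def by (metis card_2_iff insert_subset)

lemma simple_graph_edge_vertices:
  assumes "simple_graph V E" "{u, v} \<in> E"
  shows "u \<in> V" "v \<in> V"
  using assms unfolding simple_graph_def by blast+

lemma simple_graph_no_loop: "simple_graph V E \<Longrightarrow> {x, x} \<notin> E"
  unfolding simple_graph_def by fastforce

lemma simple_graph_subset: "simple_graph V E \<Longrightarrow> E' \<subseteq> E \<Longrightarrow> simple_graph V E'"
  unfolding simple_graph_def by blast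

lemma nbrs_subset: "simple_graph V E \<Longrightarrow> nbrs E x \<subseteq> V - {x}"
  unfolding nbrs_def simple_graph_def by fastforce

lemma finite_nbrs: "simple_graph V E \<Longrightarrow> finite (nbrs E x)"
  using nbrs_subset unfolding simple_graph_def by (metis finite_Diff finite_subset)

lemma edges_at_vertex:
  assumes "simple_graph V E"
  shows "{e \<in> E. x \<in> e} = (\<lambda>y. {x, y}) ` nbrs E x"
proof
  show "{e \<in> E. x \<in> e} \<subseteq> (\<lambda>y. {x, y}) ` nbrs E x"
  proof
    fix e assume "e \<in> {e \<in> E. x \<in> e}"
    then have "e \<in> E" "x \<in> e" by auto
    then obtain a b where "e = {a, b}" using assms by (blast elim: simple_graph_edgeE)
    with \<open>x \<in> e\<close> have "e = {x, if x = a then b else a}" by auto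
    with \<open>e \<in> E\<close> show "e \<in> (\<lambda>y. {x, y}) ` nbrs E x" by (auto simp: nbrs_def)
  qed
qed (auto simp: nbrs_def)

lemma inj_on_edges_at_vertex: "inj_on (\<lambda>y. {x, y}) A"
  by (auto simp: inj_on_def doubleton_eq_iff)

lemma degree_eq_card_nbrs: "simple_graph V E \<Longrightarrow> degree E x = card (nbrs E x)"
  unfolding degree_def by (simp add: edges_at_vertex card_image inj_on_edges_at_vertex)

lemma degree_le_card_minus_one:
  assumes "simple_graph V E" "x \<in> V"
  shows "degree E x \<le> card V - 1"
proof -
  have "card (nbrs E x) \<le> card (V - {x})"
    using assms nbrs_subset[OF assms(1)] unfolding simple_graph_def by (intro card_mono) auto
  then show ?thesis using assms by (simp add: degree_eq_card_nbrs)
qed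

lemma degree_pos:
  assumes "simple_graph V E" "{x, y} \<in> E"
  shows "0 < degree E x"
  using assms finite_nbrs[OF assms(1), of x]
  by (auto simp: degree_eq_card_nbrs card_gt_0_iff nbrs_def)

lemma sum_edges_split_vertex:
  assumes "simple_graph V E"
  shows "(\<Sum>e\<in>E. F e) = (\<Sum>e\<in>{e\<in>E. x \<notin> e}. F e) + (\<Sum>y\<in>nbrs E x. F {x, y})"
proof -
  have "E \<inter> {e. x \<notin> e} = {e\<in>E. x \<notin> e}" "E - {e. x \<notin> e} = {e\<in>E. x \<in> e}"
    by auto
  then have "(\<Sum>e\<in>E. F e) = (\<Sum>e\<in>{e\<in>E. x \<notin> e}. F e) + (\<Sum>e\<in>{e\<in>E. x \<in> e}. F e)"
    using sum.Int_Diff[OF simple_graph_finite_edges[OF assms], of F "{e. x \<notin> e}"] by simp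
  also have "(\<Sum>e\<in>{e\<in>E. x \<in> e}. F e) = (\<Sum>y\<in>nbrs E x. F {x, y})"
    by (simp add: edges_at_vertex[OF assms] sum.reindex inj_on_edges_at_vertex)
  finally show ?thesis .
qed

lemma chi_split_edge:
  assumes sg: "simple_graph V E" and uv: "{u, v} \<in> E"
  shows "chi \<alpha> E = (\<Sum>e\<in>{e\<in>E. u \<notin> e \<and> v \<notin> e}. real (\<Sum>w\<in>e. degree E w) powr \<alpha>)
      + real (degree E u + degree E v) powr \<alpha>
      + (\<Sum>x\<in>nbrs E u - {v}. real (degree E u + degree E x) powr \<alpha>)
      + (\<Sum>x\<in>nbrs E v - {u}. real (degree E v + degree E x) powr \<alpha>)"
proof -
  define F where "F e = real (\<Sum>w\<in>e. degree E w) powr \<alpha>" for e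
  have no_loop: "{x, x} \<notin> E" for x using simple_graph_no_loop[OF sg] .
  have "u \<noteq> v" using uv no_loop by auto
  have F_edge: "F {x, y} = real (degree E x + degree E y) powr \<alpha>" if "y \<in> nbrs E x" for x y
    using that no_loop by (cases "x = y") (auto simp: F_def nbrs_def)
  have sg_u: "simple_graph V {e\<in>E. u \<notin> e}" using sg by (rule simple_graph_subset) auto
  have "nbrs {e\<in>E. u \<notin> e} v = nbrs E v - {u}" using \<open>u \<noteq> v\<close> by (auto simp: nbrs_def)
  moreover have "{e\<in>{e\<in>E. u \<notin> e}. v \<notin> e} = {e\<in>E. u \<notin> e \<and> v \<notin> e}" by auto
  ultimately have "sum F {e\<in>E. u \<notin> e}
      = sum F {e\<in>E. u \<notin> e \<and> v \<notin> e} + (\<Sum>x\<in>nbrs E v - {u}. F {v, x})"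
    using sum_edges_split_vertex[OF sg_u, of F v] by simp
  moreover have "(\<Sum>x\<in>nbrs E u. F {u, x}) = F {u, v} + (\<Sum>x\<in>nbrs E u - {v}. F {u, x})"
    using uv finite_nbrs[OF sg] by (intro sum.remove) (auto simp: nbrs_def)
  ultimately have "chi \<alpha> E = sum F {e\<in>E. u \<notin> e \<and> v \<notin> e} + F {u, v}
      + (\<Sum>x\<in>nbrs E u - {v}. F {u, x}) + (\<Sum>x\<in>nbrs E v - {u}. F {v, x})"
    using sum_edges_split_vertex[OF sg, of F u] unfolding chi_def F_def by simp
  moreover have "F {u, v} = real (degree E u + degree E v) powr \<alpha>"
    using uv by (intro F_edge) (simp add: nbrs_def)
  moreover have
    "(\<Sum>x\<in>nbrs E u - {v}. F {u, x}) = (\<Sum>x\<in>nbrs E u - {v}. real (degree E u + degree E x) powr \<alpha>)"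
    "(\<Sum>x\<in>nbrs E v - {u}. F {v, x}) = (\<Sum>x\<in>nbrs E v - {u}. real (degree E v + degree E x) powr \<alpha>)"
    by (rule sum.cong[OF refl], rule F_edge, simp)+
  ultimately show ?thesis unfolding F_def[abs_def] by simp
qed

definition kelmans_moved :: "'a set set \<Rightarrow> 'a \<Rightarrow> 'a \<Rightarrow> 'a set" where
  "kelmans_moved E u v = nbrs E v - insert u (nbrs E u)"

definition kelmans :: "'a set set \<Rightarrow> 'a \<Rightarrow> 'a \<Rightarrow> 'a set set" where
  "kelmans E u v = (E - (\<lambda>x. {v, x}) ` kelmans_moved E u v) \<union> (\<lambda>x. {u, x}) ` kelmans_moved E u v"

lemma doubleton_mem_image_iff:
  "{x, y} \<in> (\<lambda>z. {a, z}) ` B \<longleftrightarrow> x = a \<and> y \<in> B \<or> y = a \<and> x \<in> B"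
  by (auto simp: image_iff doubleton_eq_iff)

lemma kelmans_edge_iff:
  "{x, y} \<in> kelmans E u v \<longleftrightarrow>
     {x, y} \<in> E \<and> \<not> (x = v \<and> y \<in> kelmans_moved E u v) \<and> \<not> (y = v \<and> x \<in> kelmans_moved E u v)
     \<or> x = u \<and> y \<in> kelmans_moved E u v \<or> y = u \<and> x \<in> kelmans_moved E u v"
  unfolding kelmans_def Un_iff Diff_iff doubleton_mem_image_iff by blast

lemma kelmans_keeps_edge: "{u, v} \<in> E \<Longrightarrow> {u, v} \<in> kelmans E u v"
  unfolding kelmans_edge_iff kelmans_moved_def by blast

lemma kelmans_moved_subset: "kelmans_moved E u v \<subseteq> nbrs E v"
  unfolding kelmans_moved_def by blast

lemma finite_kelmans_moved: "simple_graph V E \<Longrightarrow> finite (kelmans_moved E u v)"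
  by (rule finite_subset[OF kelmans_moved_subset finite_nbrs])

lemma
  assumes "simple_graph V E" "{u, v} \<in> E"
  shows nbrs_kelmans_fst: "nbrs (kelmans E u v) u = nbrs E u \<union> kelmans_moved E u v"
    and nbrs_kelmans_snd: "nbrs (kelmans E u v) v = nbrs E v - kelmans_moved E u v"
    and nbrs_kelmans_moved:
      "x \<in> kelmans_moved E u v \<Longrightarrow> nbrs (kelmans E u v) x = insert u (nbrs E x - {v})"
    and nbrs_kelmans_other: "x \<noteq> u \<Longrightarrow> x \<noteq> v \<Longrightarrow> x \<notin> kelmans_moved E u v \<Longrightarrow>
      nbrs (kelmans E u v) x = nbrs E x"
proof -
  define B where "B = kelmans_moved E u v"
  have no_loop: "{x, x} \<notin> E" for x using simple_graph_no_loop[OF assms(1)] .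
  then have "u \<noteq> v" using assms(2) by auto
  have "u \<notin> B" "v \<notin> B"
    using no_loop unfolding B_def kelmans_moved_def nbrs_def by auto
  show "nbrs (kelmans E u v) u = nbrs E u \<union> B"
    using \<open>u \<noteq> v\<close> \<open>u \<notin> B\<close> unfolding nbrs_def kelmans_edge_iff B_def[symmetric] by auto
  show "nbrs (kelmans E u v) v = nbrs E v - B"
    using \<open>u \<noteq> v\<close> \<open>v \<notin> B\<close> unfolding nbrs_def kelmans_edge_iff B_def[symmetric] by auto
  show "nbrs (kelmans E u v) x = nbrs E x" if "x \<noteq> u" "x \<noteq> v" "x \<notin> B"
    using that unfolding nbrs_def kelmans_edge_iff B_def[symmetric] by auto
  show "nbrs (kelmans E u v) x = insert u (nbrs E x - {v})" if "x \<in> B"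
    using that \<open>u \<notin> B\<close> \<open>v \<notin> B\<close>
    unfolding nbrs_def kelmans_edge_iff B_def[symmetric] by auto
qed

lemma simple_graph_kelmans:
  assumes "simple_graph V E" "u \<in> V"
  shows "simple_graph V (kelmans E u v)"
proof -
  have "kelmans_moved E u v \<subseteq> V"
    using kelmans_moved_subset[of E u v] nbrs_subset[OF assms(1), of v] by blast
  moreover have "u \<notin> kelmans_moved E u v"
    unfolding kelmans_moved_def by blast
  ultimately have "\<forall>e\<in>(\<lambda>x. {u, x}) ` kelmans_moved E u v. e \<subseteq> V \<and> card e = 2"
    using assms(2) by (auto simp: card_insert_if)
  moreover have "\<forall>e\<in>E - (\<lambda>x. {v, x}) ` kelmans_moved E u v. e \<subseteq> V \<and> card e = 2"
    using assms(1) unfolding simple_graph_def by blast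
  ultimately show ?thesis
    using assms(1) unfolding simple_graph_def kelmans_def ball_Un by blast
qed

lemma card_kelmans:
  assumes "simple_graph V E"
  shows "card (kelmans E u v) = card E"
proof -
  define B where "B = kelmans_moved E u v"
  define R where "R = (\<lambda>x. {v, x}) ` B"
  define S where "S = (\<lambda>x. {u, x}) ` B"
  have "finite E" "finite B"
    using simple_graph_finite_edges[OF assms] finite_kelmans_moved[OF assms] unfolding B_def .
  have "{v, x} \<in> E" "{u, x} \<notin> E" if "x \<in> B" for x
    using that unfolding B_def kelmans_moved_def nbrs_def by auto
  then have "R \<subseteq> E" "(E - R) \<inter> S = {}"
    unfolding R_def S_def by auto
  have "card R = card B" "card S = card B"
    unfolding R_def S_def by (simp_all add: card_image inj_on_edges_at_vertex)
  have "card R \<le> card E"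
    using \<open>finite E\<close> \<open>R \<subseteq> E\<close> by (rule card_mono)
  have "card (kelmans E u v) = card (E - R) + card S"
    unfolding kelmans_def B_def[symmetric] R_def[symmetric] S_def[symmetric]
    using \<open>finite E\<close> \<open>finite B\<close> \<open>(E - R) \<inter> S = {}\<close> by (simp add: S_def card_Un_disjoint)
  also have "\<dots> = card E"
    using \<open>finite E\<close> \<open>R \<subseteq> E\<close> \<open>card R \<le> card E\<close> \<open>card R = card B\<close> \<open>card S = card B\<close>
    by (simp add: card_Diff_subset finite_subset)
  finally show ?thesis .
qed

lemma card_insert_Diff_swap:
  assumes "b \<in> A" "a \<notin> A" "finite A"
  shows "card (insert a (A - {b})) = card A"
proof -
  have "card (insert a (A - {b})) = Suc (card (A - {b}))"
    using assms by (intro card_insert_disjoint) auto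
  also have "\<dots> = card A"
    using assms by (intro card_Suc_Diff1)
  finally show ?thesis .
qed

lemma
  assumes "simple_graph V E" "{u, v} \<in> E"
  shows degree_kelmans_fst: "degree (kelmans E u v) u = degree E u + card (kelmans_moved E u v)"
    and degree_kelmans_snd: "degree (kelmans E u v) v + card (kelmans_moved E u v) = degree E v"
    and degree_kelmans_other: "x \<noteq> u \<Longrightarrow> x \<noteq> v \<Longrightarrow> degree (kelmans E u v) x = degree E x"
proof -
  define B where "B = kelmans_moved E u v"
  have sg': "simple_graph V (kelmans E u v)"
    using assms(1) simple_graph_edge_vertices(1)[OF assms] by (rule simple_graph_kelmans)
  have "finite B" "B \<subseteq> nbrs E v" "nbrs E u \<inter> B = {}"
    using finite_kelmans_moved[OF assms(1)] unfolding B_def kelmans_moved_def by auto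
  have "card (nbrs E u \<union> B) = card (nbrs E u) + card B"
    using finite_nbrs[OF assms(1)] \<open>finite B\<close> \<open>nbrs E u \<inter> B = {}\<close> by (rule card_Un_disjoint)
  then show "degree (kelmans E u v) u = degree E u + card B"
    unfolding degree_eq_card_nbrs[OF sg'] degree_eq_card_nbrs[OF assms(1)]
      nbrs_kelmans_fst[OF assms] B_def .
  have "card (nbrs E v - B) + card B = card (nbrs E v)"
    using \<open>finite B\<close> \<open>B \<subseteq> nbrs E v\<close> finite_nbrs[OF assms(1)]
    by (simp add: card_Diff_subset card_mono)
  then show "degree (kelmans E u v) v + card B = degree E v"
    unfolding degree_eq_card_nbrs[OF sg'] degree_eq_card_nbrs[OF assms(1)]
      nbrs_kelmans_snd[OF assms] B_def .
  show "degree (kelmans E u v) x = degree E x" if "x \<noteq> u" "x \<noteq> v"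
  proof (cases "x \<in> B")
    case True
    then have "{v, x} \<in> E" "{u, x} \<notin> E"
      unfolding B_def kelmans_moved_def nbrs_def by auto
    then have "v \<in> nbrs E x" "u \<notin> nbrs E x"
      unfolding nbrs_def by (simp_all add: insert_commute)
    then have "card (insert u (nbrs E x - {v})) = card (nbrs E x)"
      using finite_nbrs[OF assms(1)] by (rule card_insert_Diff_swap)
    then show ?thesis
      using True by (simp add: degree_eq_card_nbrs[OF sg'] degree_eq_card_nbrs[OF assms(1)]
          nbrs_kelmans_moved[OF assms] B_def)
  next
    case False
    then show ?thesis
      using that by (simp add: degree_eq_card_nbrs[OF sg'] degree_eq_card_nbrs[OF assms(1)]
          nbrs_kelmans_other[OF assms] B_def)
  qed
qed

lemma kelmans_untouched_edges: "{e \<in> kelmans E u v. u \<notin> e \<and> v \<notin> e} = {e \<in> E. u \<notin> e \<and> v \<notin> e}"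
  unfolding kelmans_def by auto

lemma connected_graph_kelmans:
  assumes conn: "connected_graph V E" and uv: "{u, v} \<in> E"
  shows "connected_graph V (kelmans E u v)"
proof -
  define K where "K = kelmans E u v"
  have sg: "simple_graph V E" and walks: "\<forall>a\<in>V. \<forall>c\<in>V. (adj E)\<^sup>*\<^sup>* a c" "V \<noteq> {}"
    using conn unfolding connected_graph_def by auto
  have "{u, v} \<in> K" unfolding K_def using uv by (rule kelmans_keeps_edge)
  have step: "(adj K)\<^sup>*\<^sup>* a c" if "adj E a c" for a c
  proof (cases "adj K a c")
    case True
    then show ?thesis by (rule r_into_rtranclp)
  next
    case False
    then have "a = v \<and> c \<in> kelmans_moved E u v \<or> c = v \<and> a \<in> kelmans_moved E u v"
      using that unfolding adj_def K_def kelmans_edge_iff by blast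
    moreover have "adj K u x" "adj K x u" if "x \<in> kelmans_moved E u v" for x
      using that unfolding adj_def K_def kelmans_edge_iff by simp_all
    moreover have "adj K u v" "adj K v u"
      using \<open>{u, v} \<in> K\<close> unfolding adj_def by (simp_all add: insert_commute)
    ultimately show ?thesis
      by (metis converse_rtranclp_into_rtranclp r_into_rtranclp)
  qed
  have "(adj K)\<^sup>*\<^sup>* a c" if "(adj E)\<^sup>*\<^sup>* a c" for a c
    using that by (induction rule: rtranclp_induct) (auto dest: step intro: rtranclp_trans)
  moreover have "simple_graph V K"
    unfolding K_def using sg simple_graph_edge_vertices(1)[OF sg uv] by (rule simple_graph_kelmans)
  ultimately show ?thesis
    using walks unfolding connected_graph_def K_def by blast
qed

lemma rtranclp_leaves_set:
  "r\<^sup>*\<^sup>* a b \<Longrightarrow> a \<in> S \<Longrightarrow> b \<notin> S \<Longrightarrow> \<exists>x y. r x y \<and> x \<in> S \<and> y \<notin> S"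
  by (induction rule: rtranclp_induct) auto

lemma kelmans_moved_nonempty:
  assumes conn: "connected_graph V E" and "u \<in> V" and deg: "degree E u < card V - 1"
  obtains v where "{u, v} \<in> E" "kelmans_moved E u v \<noteq> {}"
proof -
  have sg: "simple_graph V E" using conn unfolding connected_graph_def by blast
  have "card (nbrs E u) < card (V - {u})"
    using deg \<open>u \<in> V\<close> sg by (simp add: degree_eq_card_nbrs[OF sg] simple_graph_def)
  then obtain w where "w \<in> V" "w \<notin> insert u (nbrs E u)"
    by (metis Diff_iff card_mono finite_nbrs[OF sg] insert_iff leD subsetI)
  moreover have "(adj E)\<^sup>*\<^sup>* u w"
    using conn \<open>u \<in> V\<close> \<open>w \<in> V\<close> unfolding connected_graph_def by blast
  ultimately obtain a c where ac: "adj E a c" "a \<in> insert u (nbrs E u)" "c \<notin> insert u (nbrs E u)"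
    using rtranclp_leaves_set[of "adj E" u w "insert u (nbrs E u)"] by blast
  then have "a \<noteq> u" unfolding adj_def nbrs_def by auto
  with ac have "{u, a} \<in> E" "c \<in> kelmans_moved E u a"
    unfolding adj_def nbrs_def kelmans_moved_def by auto
  then show ?thesis using that by blast
qed

lemma chi_kelmans:
  assumes sg: "simple_graph V E" and uv: "{u, v} \<in> E"
  defines "B \<equiv> kelmans_moved E u v"
  shows "chi \<alpha> (kelmans E u v)
      = (\<Sum>e\<in>{e\<in>E. u \<notin> e \<and> v \<notin> e}. real (\<Sum>w\<in>e. degree E w) powr \<alpha>)
        + real (degree E u + degree E v) powr \<alpha>
        + (\<Sum>x\<in>(nbrs E u - {v}) \<union> B. (real (degree E u) + card B + degree E x) powr \<alpha>)
        + (\<Sum>x\<in>nbrs E u \<inter> nbrs E v. (real (degree E v) - card B + degree E x) powr \<alpha>)"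
proof -
  define K where "K = kelmans E u v"
  have no_loop: "{x, x} \<notin> E" for x using simple_graph_no_loop[OF sg] .
  have sgK: "simple_graph V K"
    unfolding K_def using sg simple_graph_edge_vertices(1)[OF sg uv] by (rule simple_graph_kelmans)
  have "v \<notin> B"
    using no_loop unfolding B_def kelmans_moved_def nbrs_def by auto
  have "{u, v} \<in> K" unfolding K_def using uv by (rule kelmans_keeps_edge)
  have nbrs_K: "nbrs K u - {v} = (nbrs E u - {v}) \<union> B" "nbrs K v - {u} = nbrs E u \<inter> nbrs E v"
    using no_loop \<open>v \<notin> B\<close> unfolding K_def nbrs_kelmans_fst[OF sg uv] nbrs_kelmans_snd[OF sg uv]
    unfolding B_def kelmans_moved_def by (auto simp: nbrs_def)
  have deg_K: "real (degree K u) = real (degree E u) + card B"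
    "real (degree K v) = real (degree E v) - card B"
    "x \<noteq> u \<Longrightarrow> x \<noteq> v \<Longrightarrow> degree K x = degree E x" for x
    using degree_kelmans_fst[OF sg uv] degree_kelmans_snd[OF sg uv] degree_kelmans_other[OF sg uv]
    unfolding K_def B_def by (simp_all flip: of_nat_add)
  have "x \<noteq> u" "x \<noteq> v" if "x \<in> nbrs K u - {v} \<union> (nbrs K v - {u})" for x
    using that no_loop simple_graph_no_loop[OF sgK] by (auto simp: nbrs_def)
  then have deg_K_nbrs: "degree K x = degree E x"
    if "x \<in> (nbrs E u - {v}) \<union> B \<union> nbrs E u \<inter> nbrs E v" for x
    using that deg_K(3) unfolding nbrs_K by blast
  have "(\<Sum>e\<in>{e\<in>K. u \<notin> e \<and> v \<notin> e}. real (\<Sum>w\<in>e. degree K w) powr \<alpha>)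
      = (\<Sum>e\<in>{e\<in>E. u \<notin> e \<and> v \<notin> e}. real (\<Sum>w\<in>e. degree E w) powr \<alpha>)"
    unfolding K_def kelmans_untouched_edges
    by (intro sum.cong refl arg_cong[where f = "\<lambda>n. real n powr \<alpha>"])
      (auto intro: degree_kelmans_other[OF sg uv])
  then show ?thesis
    unfolding K_def[symmetric] chi_split_edge[OF sgK \<open>{u, v} \<in> K\<close>] nbrs_K
    by (simp add: deg_K) (intro arg_cong2[where f = "(+)"] sum.cong refl; auto simp: deg_K_nbrs)
qed

lemma chi_kelmans_gt:
  assumes "1 \<le> \<alpha>" and sg: "simple_graph V E" and uv: "{u, v} \<in> E"
    and "degree E v \<le> degree E u" and "kelmans_moved E u v \<noteq> {}"
  shows "chi \<alpha> E < chi \<alpha> (kelmans E u v)"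
proof -
  define B where "B = kelmans_moved E u v"
  define A where "A = nbrs E u \<inter> nbrs E v"
  define C where "C = nbrs E u - insert v (nbrs E v)"
  define p where "p = real (degree E u)"
  define q where "q = real (degree E v)"
  define k where "k = real (card B)"
  define g where "g x = real (degree E x)" for x
  have no_loop: "{x, x} \<notin> E" for x using simple_graph_no_loop[OF sg] .
  have "finite A" "finite B" "finite C"
    using finite_nbrs[OF sg] finite_kelmans_moved[OF sg] unfolding A_def B_def C_def by auto
  have parts: "nbrs E u - {v} = A \<union> C" "A \<inter> C = {}"
    "nbrs E v - {u} = A \<union> B" "A \<inter> B = {}" "(A \<union> C) \<inter> B = {}"
    using no_loop unfolding A_def B_def C_def kelmans_moved_def by (auto simp: nbrs_def)
  have "chi \<alpha> E = (\<Sum>e\<in>{e\<in>E. u \<notin> e \<and> v \<notin> e}. real (\<Sum>w\<in>e. degree E w) powr \<alpha>) + (p + q) powr \<alpha>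
      + ((\<Sum>x\<in>A. (p + g x) powr \<alpha> + (q + g x) powr \<alpha>) + (\<Sum>x\<in>C. (p + g x) powr \<alpha>)
        + (\<Sum>x\<in>B. (q + g x) powr \<alpha>))"
    unfolding chi_split_edge[OF sg uv] parts(1,3)
    using \<open>finite A\<close> \<open>finite B\<close> \<open>finite C\<close> parts
    by (simp add: sum.union_disjoint sum.distrib p_def q_def g_def)
  moreover have "chi \<alpha> (kelmans E u v)
      = (\<Sum>e\<in>{e\<in>E. u \<notin> e \<and> v \<notin> e}. real (\<Sum>w\<in>e. degree E w) powr \<alpha>) + (p + q) powr \<alpha>
      + ((\<Sum>x\<in>A. (p + k + g x) powr \<alpha> + (q - k + g x) powr \<alpha>) + (\<Sum>x\<in>C. (p + k + g x) powr \<alpha>)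
        + (\<Sum>x\<in>B. (p + k + g x) powr \<alpha>))"
    unfolding chi_kelmans[OF sg uv] B_def[symmetric] A_def[symmetric] parts(1)
    using \<open>finite A\<close> \<open>finite B\<close> \<open>finite C\<close> parts
    by (simp add: sum.union_disjoint sum.distrib p_def q_def k_def g_def)
  moreover have "0 < q - k"
  proof -
    have "{v, u} \<in> kelmans E u v"
      using kelmans_keeps_edge[OF uv] by (simp add: insert_commute)
    with simple_graph_kelmans[OF sg simple_graph_edge_vertices(1)[OF sg uv]]
    have "0 < degree (kelmans E u v) v" by (rule degree_pos)
    then show ?thesis
      using degree_kelmans_snd[OF sg uv] unfolding q_def k_def B_def by linarith
  qed
  ultimately show ?thesis
    using powr_sum_shift_less[of \<alpha> B g q p k A C] assms(1,4,5) \<open>finite B\<close>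
    unfolding p_def q_def k_def g_def B_def[symmetric]
    by (simp add: card_gt_0_iff)
qed

theorem corollary3:
  fixes \<alpha> :: real and V :: "'a set" and E :: "'a set set"
  assumes "\<alpha> \<ge> 1"
    and "connected_graph V E"
    and "\<And>E'. connected_graph V E' \<Longrightarrow> card E' = card E \<Longrightarrow> chi \<alpha> E' \<le> chi \<alpha> E"
  shows "max_degree V E = card V - 1"
proof (rule ccontr)
  assume not_full: "max_degree V E \<noteq> card V - 1"
  have sg: "simple_graph V E" and "V \<noteq> {}"
    using assms(2) unfolding connected_graph_def by auto
  then have "finite (degree E ` V)" "degree E ` V \<noteq> {}"
    unfolding simple_graph_def by auto
  then obtain u where "u \<in> V" and u_max: "degree E u = max_degree V E"
    unfolding max_degree_def by (metis Max_in imageE)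
  have "degree E u < card V - 1"
    using degree_le_card_minus_one[OF sg \<open>u \<in> V\<close>] not_full u_max by simp
  then obtain v where uv: "{u, v} \<in> E" and moved: "kelmans_moved E u v \<noteq> {}"
    using kelmans_moved_nonempty[OF assms(2) \<open>u \<in> V\<close>] by blast
  have "v \<in> V" using simple_graph_edge_vertices(2)[OF sg uv] .
  then have "degree E v \<le> degree E u"
    using \<open>finite (degree E ` V)\<close> u_max unfolding max_degree_def by simp
  then have "chi \<alpha> E < chi \<alpha> (kelmans E u v)"
    using chi_kelmans_gt[OF assms(1) sg uv] moved by blast
  moreover have "chi \<alpha> (kelmans E u v) \<le> chi \<alpha> E"
    using assms(3) connected_graph_kelmans[OF assms(2) uv] card_kelmans[OF sg] by blast
  ultimately show False by simp
qed

end
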